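(* Assume $q=p$ and let $P=[1:0:0]\in C$. The higher ramification groups in lower numbering of $P$ under the action of $G$ are $$G_{P,i}=\begin{cases}B&i\in\{-1,0\},\\ U& 1\leq i\leq p+1,\\ 1& i\geq p+2.\end{cases}$$
   Context: $p$ odd prime, $\mathbb{F}$ algebraically closed of characteristic $p$, $C$ the Drinfeld curve $XY^p-X^pY-Z^{p+1}=0$ in $\mathbb{P}^2(\mathbb{F})$, $G=SL_2(\mathbb{F}_p)$ acting by $\begin{pmatrix}\alpha&\beta\\ \gamma&\delta\end{pmatrix}\cdot[X:Y:Z]=[\alpha X+\beta Y:\gamma X+\delta Y:Z]$; $U$ = upper unitriangular matrices, $B$ = upper triangular matrices in $G$. Lower ramification groups: $G_{P,-1}=G_P$ (stabilizer) and $G_{P,i}=\{g\in G_P:\operatorname{ord}_P(g^*t-t)\geq i+1\}$ for $i\geq0$, $t$ a local parameter at $P$. *)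

theory Defs
  imports "HOL-Computational_Algebra.Polynomial"
begin

definition alg_closed :: "'a::field itself \<Rightarrow> bool" where
  "alg_closed _ \<longleftrightarrow> (\<forall>f::'a poly. degree f > 0 \<longrightarrow> (\<exists>x. poly f x = 0))"

type_synonym 'a pt = "'a \<times> 'a \<times> 'a"
type_synonym 'a rep = "('a pt \<Rightarrow> 'a) \<times> ('a pt \<Rightarrow> 'a)"

definition hpoly :: "nat \<Rightarrow> ('a::field pt \<Rightarrow> 'a) \<Rightarrow> bool" where
  "hpoly d f \<longleftrightarrow> (\<exists>c :: nat \<Rightarrow> nat \<Rightarrow> 'a.
      f = (\<lambda>(x,y,z). \<Sum>i\<le>d. \<Sum>j\<le>d - i. c i j * x ^ i * y ^ j * z ^ (d - i - j)))"

definition on_C :: "nat \<Rightarrow> 'a::field pt \<Rightarrow> bool" where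
  "on_C p v \<longleftrightarrow> v \<noteq> (0,0,0) \<and>
     (case v of (X,Y,Z) \<Rightarrow> X * Y ^ p - X ^ p * Y - Z ^ (p + 1) = 0)"

definition proj_eq :: "'a::field pt \<Rightarrow> 'a pt \<Rightarrow> bool" where
  "proj_eq v w \<longleftrightarrow> (\<exists>c. c \<noteq> 0 \<and> (case v of (x,y,z) \<Rightarrow> w = (c*x, c*y, c*z)))"

text \<open>A rational function on C, represented as a quotient a/b of homogeneous
  polynomials of equal degree with b not vanishing identically on C.\<close>
definition ratfun :: "nat \<Rightarrow> 'a::field rep \<Rightarrow> bool" where
  "ratfun p r \<longleftrightarrow> (\<exists>d. hpoly d (fst r) \<and> hpoly d (snd r) \<and> (\<exists>v. on_C p v \<and> snd r v \<noteq> 0))"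

definition feq :: "nat \<Rightarrow> 'a::field rep \<Rightarrow> 'a rep \<Rightarrow> bool" where
  "feq p r s \<longleftrightarrow> (\<forall>v. on_C p v \<longrightarrow> fst r v * snd s v = fst s v * snd r v)"

definition rmul :: "'a::field rep \<Rightarrow> 'a rep \<Rightarrow> 'a rep" where
  "rmul r s = ((\<lambda>v. fst r v * fst s v), (\<lambda>v. snd r v * snd s v))"

definition radd :: "'a::field rep \<Rightarrow> 'a rep \<Rightarrow> 'a rep" where
  "radd r s = ((\<lambda>v. fst r v * snd s v + fst s v * snd r v), (\<lambda>v. snd r v * snd s v))"

definition rsub :: "'a::field rep \<Rightarrow> 'a rep \<Rightarrow> 'a rep" where
  "rsub r s = ((\<lambda>v. fst r v * snd s v - fst s v * snd r v), (\<lambda>v. snd r v * snd s v))"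

definition rone :: "'a::field rep" where "rone = ((\<lambda>v. 1), (\<lambda>v. 1))"
definition rzero :: "'a::field rep" where "rzero = ((\<lambda>v. 0), (\<lambda>v. 1))"

primrec rprodn :: "(nat \<Rightarrow> 'a::field rep) \<Rightarrow> nat \<Rightarrow> 'a rep" where
  "rprodn f 0 = rone"
| "rprodn f (Suc n) = rmul (rprodn f n) (f n)"

primrec rsumn :: "(nat \<Rightarrow> 'a::field rep) \<Rightarrow> nat \<Rightarrow> 'a rep" where
  "rsumn f 0 = rzero"
| "rsumn f (Suc n) = radd (rsumn f n) (f n)"

definition P0 :: "'a::field pt" where "P0 = (1, 0, 0)"

definition local_ring :: "nat \<Rightarrow> 'a::field pt \<Rightarrow> 'a rep set" where
  "local_ring p P = {r. ratfun p r \<and> snd r P \<noteq> 0}"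

definition max_ideal :: "nat \<Rightarrow> 'a::field pt \<Rightarrow> 'a rep set" where
  "max_ideal p P = {r \<in> local_ring p P. fst r P = 0}"

text \<open>h lies in the n-th power of m_P, i.e. ord_P(h) >= n.\<close>
definition in_mpow :: "nat \<Rightarrow> 'a::field pt \<Rightarrow> nat \<Rightarrow> 'a rep \<Rightarrow> bool" where
  "in_mpow p P n h \<longleftrightarrow> h \<in> local_ring p P \<and>
     (\<exists>k (s :: nat \<Rightarrow> 'a rep) (r :: nat \<Rightarrow> nat \<Rightarrow> 'a rep).
        (\<forall>j<k. s j \<in> local_ring p P \<and> (\<forall>l<n. r j l \<in> max_ideal p P)) \<and>
        feq p h (rsumn (\<lambda>j. rmul (s j) (rprodn (r j) n)) k))"

definition local_param :: "nat \<Rightarrow> 'a::field pt \<Rightarrow> 'a rep \<Rightarrow> bool" where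
  "local_param p P t \<longleftrightarrow> t \<in> max_ideal p P \<and> \<not> in_mpow p P 2 t"

type_synonym 'a mat2 = "'a \<times> 'a \<times> 'a \<times> 'a"

definition act :: "'a::field mat2 \<Rightarrow> 'a pt \<Rightarrow> 'a pt" where
  "act g v = (case g of (a,b,c,d) \<Rightarrow> case v of (X,Y,Z) \<Rightarrow> (a*X + b*Y, c*X + d*Y, Z))"

definition pull :: "'a::field mat2 \<Rightarrow> 'a rep \<Rightarrow> 'a rep" where
  "pull g r = (fst r \<circ> act g, snd r \<circ> act g)"

definition Fp :: "'a::field set" where "Fp = range of_nat"

definition SL2 :: "'a::field mat2 set" where
  "SL2 = {(a,b,c,d). a \<in> Fp \<and> b \<in> Fp \<and> c \<in> Fp \<and> d \<in> Fp \<and> a*d - b*c = 1}"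

definition Bor :: "'a::field mat2 set" where
  "Bor = {(a,b,c,d) \<in> SL2. c = 0}"

definition Unip :: "'a::field mat2 set" where
  "Unip = {(a,b,c,d) \<in> SL2. a = 1 \<and> c = 0 \<and> d = 1}"

definition stab :: "'a::field pt \<Rightarrow> 'a mat2 set" where
  "stab P = {g \<in> SL2. proj_eq P (act g P)}"

definition ram_group :: "nat \<Rightarrow> 'a::field pt \<Rightarrow> 'a rep \<Rightarrow> int \<Rightarrow> 'a mat2 set" where
  "ram_group p P t i =
     (if i = -1 then stab P
      else {g \<in> stab P. in_mpow p P (nat (i + 1)) (rsub (pull g t) t)})"

end

theory Submission
  imports Defs "HOL-Computational_Algebra.Primes" "HOL-Number_Theory.Cong"
begin

text \<open>
  In the chart x = 1 the curve is y^p - y = z^(p+1), and z is a local parameter at P = [1:0:0].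
  The polynomial map z \<mapsto> (1, -z^(p+1), z) follows the branch of C through P up to order
  p(p+1): it violates the equation only by the term y^p. Dividing by the equation, which is monic
  in y, and using that for fixed z the Artin--Schreier equation has the p distinct roots r + k,
  one sees that an element of m_P^n (n \<le> p(p+1)) has numerator vanishing to order n along this
  map. Writing the numerator of a local parameter t as y A1 + z A2 with A2(P) \<noteq> 0, one expands
  g^*t - t along the map: for diagonal g with a \<noteq> 1 it has order 1, for unipotent g with b \<noteq> 0
  order p + 2, the leading coefficient being a^(m-1) (1 - a) A2(P) B(P), resp. b A2(P) B(P)
  (B the denominator of t, m its degree). Conversely, for unipotent g the difference
  g^*t - t = y N / (B(g v) B) is a product of p + 2 elements of m_P, since y = (z/x)^(p+1) x^p / W
  on C with W = y^(p-1) - x^(p-1).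
\<close>

section \<open>Homogeneous polynomial functions\<close>

inductive homog :: "nat \<Rightarrow> ('a::field pt \<Rightarrow> 'a) \<Rightarrow> bool" where
  homog_monom: "i + j \<le> d \<Longrightarrow>
    homog d (\<lambda>v. c * fst v ^ i * fst (snd v) ^ j * snd (snd v) ^ (d - i - j))"
| homog_add: "homog d f \<Longrightarrow> homog d g \<Longrightarrow> homog d (\<lambda>v. f v + g v)"

lemma homog_cong: "homog d f \<Longrightarrow> (\<And>v. f v = g v) \<Longrightarrow> homog d g"
  by (metis ext)

lemma homog_zero: "homog d (\<lambda>v. 0)"
  using homog_monom[of 0 0 d 0] by simp

lemma homog_const: "homog 0 (\<lambda>v. c)"
  using homog_monom[of 0 0 0 c] by simp

lemma homog_X: "homog 1 fst"
  using homog_monom[of 1 0 1 1] by simp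

lemma homog_Y: "homog 1 (\<lambda>v. fst (snd v))"
  using homog_monom[of 0 1 1 1] by simp

lemma homog_Z: "homog 1 (\<lambda>v. snd (snd v))"
  using homog_monom[of 0 0 1 1] by simp

lemma homog_smult: "homog d f \<Longrightarrow> homog d (\<lambda>v. c * f v)"
proof (induction rule: homog.induct)
  case (homog_monom i j d c')
  then show ?case using homog.homog_monom[of i j d "c * c'"] by (simp add: mult.assoc)
next
  case (homog_add d f g)
  then show ?case using homog.homog_add by (fastforce simp: distrib_left)
qed

lemma homog_diff: "homog d f \<Longrightarrow> homog d g \<Longrightarrow> homog d (\<lambda>v. f v - g v)"
  using homog_add[of d f "\<lambda>v. - g v"] homog_smult[of d g "-1"] by simp

lemma homog_linear: "homog 1 (\<lambda>v. a * fst v + b * fst (snd v))"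
  using homog_add[OF homog_smult[OF homog_X] homog_smult[OF homog_Y]] .

lemma homog_mult_monom:
  assumes "homog e g" "i + j \<le> d"
  shows "homog (d + e) (\<lambda>v. c * fst v ^ i * fst (snd v) ^ j * snd (snd v) ^ (d - i - j) * g v)"
  using assms(1)
proof (induction rule: homog.induct)
  case (homog_monom i' j' e c')
  have "homog (d + e) (\<lambda>v. (c * c') * fst v ^ (i + i') * fst (snd v) ^ (j + j') *
      snd (snd v) ^ ((d + e) - (i + i') - (j + j')))"
    by (rule homog.homog_monom) (use homog_monom assms in auto)
  then show ?case
    by (rule homog_cong) (use homog_monom assms in \<open>auto simp: algebra_simps simp flip: power_add\<close>)
next
  case (homog_add e f g)
  then show ?case using homog.homog_add by (fastforce simp: distrib_left)
qed

lemma homog_mult: "homog d f \<Longrightarrow> homog e g \<Longrightarrow> homog (d + e) (\<lambda>v. f v * g v)"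
proof (induction rule: homog.induct)
  case (homog_monom i j d c)
  then show ?case using homog_mult_monom by blast
next
  case (homog_add d f1 f2)
  then show ?case using homog.homog_add by (fastforce simp: distrib_right)
qed

lemma homog_power: "homog 1 f \<Longrightarrow> homog n (\<lambda>v. f v ^ n)"
  by (induction n) (use homog_const homog_mult[of 1 f] in auto)

lemma homog_sum: "finite I \<Longrightarrow> (\<And>i. i \<in> I \<Longrightarrow> homog d (F i)) \<Longrightarrow> homog d (\<lambda>v. \<Sum>i\<in>I. F i v)"
  by (induction I rule: finite_induct) (auto intro: homog_zero homog_add)

lemma homog_scale: "homog d f \<Longrightarrow> f (a * x, a * y, a * z) = a ^ d * f (x, y, z)"
proof (induction rule: homog.induct)
  case (homog_monom i j d c)
  then have "a ^ d = a ^ i * a ^ j * a ^ (d - i - j)" by (simp flip: power_add)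
  then show ?case by (simp add: power_mult_distrib)
qed (simp add: distrib_left)

lemma homog_0_const:
  assumes "homog 0 f"
  shows "f v = f w"
proof -
  have "f (x, y, z) = f (0, 0, 0)" for x y z using homog_scale[OF assms, of 0 x y z] by simp
  from this[of "fst v" "fst (snd v)" "snd (snd v)"] this[of "fst w" "fst (snd w)" "snd (snd w)"]
  show ?thesis by simp
qed

lemma homog_comp_act: "homog d f \<Longrightarrow> homog d (\<lambda>v. f (act g v))"
proof (induction rule: homog.induct)
  case (homog_monom i j d c)
  obtain a b c' e where g: "g = (a, b, c', e)" by (cases g) auto
  have "homog (i + j + (d - i - j)) (\<lambda>v. (a * fst v + b * fst (snd v)) ^ i *
      (c' * fst v + e * fst (snd v)) ^ j * snd (snd v) ^ (d - i - j))"
    by (intro homog_mult homog_power homog_linear homog_Z)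
  then have "homog d (\<lambda>v. (a * fst v + b * fst (snd v)) ^ i *
      (c' * fst v + e * fst (snd v)) ^ j * snd (snd v) ^ (d - i - j))"
    using homog_monom by simp
  from homog_smult[OF this, of c] show ?case
    by (rule homog_cong) (use homog_monom in \<open>auto simp: act_def g mult.assoc split: prod.splits\<close>)
qed (use homog_add in blast)

lemma hpoly_iff_homog: "hpoly d f \<longleftrightarrow> homog d f"
proof
  assume "hpoly d f"
  then obtain c where f: "f = (\<lambda>(x, y, z). \<Sum>i\<le>d. \<Sum>j\<le>d - i. c i j * x ^ i * y ^ j * z ^ (d - i - j))"
    unfolding hpoly_def by blast
  have "homog d (\<lambda>v. \<Sum>i\<le>d. \<Sum>j\<le>d - i. c i j * fst v ^ i * fst (snd v) ^ j * snd (snd v) ^ (d - i - j))"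
    by (intro homog_sum homog_monom) auto
  then show "homog d f" by (rule homog_cong) (auto simp: f split: prod.splits)
next
  assume "homog d f"
  then show "hpoly d f"
  proof (induction rule: homog.induct)
    case (homog_monom i j d c)
    define c' where "c' = (\<lambda>i' j'. if i' = i \<and> j' = j then c else 0)"
    have "(\<Sum>j'\<le>d - i'. c' i' j' * x ^ i' * y ^ j' * z ^ (d - i' - j'))
        = (if i' = i then c * x ^ i * y ^ j * z ^ (d - i - j) else 0)" for i' and x y z :: 'a
    proof -
      have "(\<Sum>j'\<le>d - i'. c' i' j' * x ^ i' * y ^ j' * z ^ (d - i' - j'))
          = (\<Sum>j'\<le>d - i'. if j' = j then c' i' j * x ^ i' * y ^ j * z ^ (d - i' - j) else 0)"
        by (rule sum.cong) (auto simp: c'_def)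
      then show ?thesis using homog_monom by (auto simp: c'_def)
    qed
    then have "(\<Sum>i'\<le>d. \<Sum>j'\<le>d - i'. c' i' j' * x ^ i' * y ^ j' * z ^ (d - i' - j'))
        = c * x ^ i * y ^ j * z ^ (d - i - j)" for x y z :: 'a
      using homog_monom by (simp add: sum.delta)
    then show ?case unfolding hpoly_def by (intro exI[of _ c']) auto
  next
    case (homog_add d f g)
    then obtain c c' where
      "f = (\<lambda>(x, y, z). \<Sum>i\<le>d. \<Sum>j\<le>d - i. c i j * x ^ i * y ^ j * z ^ (d - i - j))"
      "g = (\<lambda>(x, y, z). \<Sum>i\<le>d. \<Sum>j\<le>d - i. c' i j * x ^ i * y ^ j * z ^ (d - i - j))"
      unfolding hpoly_def by blast
    then show ?case unfolding hpoly_def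
      by (intro exI[of _ "\<lambda>i j. c i j + c' i j"])
         (auto simp: algebra_simps sum.distrib split: prod.splits)
  qed
qed

lemma act_diag_P0: "act (a, b, 0, d) P0 = (a * 1, a * 0, a * (0 :: 'a::field))"
  by (simp add: act_def P0_def)

lemma homog_act_diag_P0: "homog m f \<Longrightarrow> f (act (a, b, 0, d) P0) = a ^ m * f P0"
  unfolding act_diag_P0 by (simp only: homog_scale) (simp add: P0_def)

lemma power_shift_diff:
  "\<exists>S. homog i S \<and> S P0 = of_nat (Suc i) * b \<and>
     (\<forall>x y z. (x + b * y) ^ Suc i - x ^ Suc i = y * S (x, y, z :: 'a::field))"
proof (induction i)
  case 0
  show ?case by (intro exI[of _ "\<lambda>v. b"]) (auto intro: homog_const)
next
  case (Suc i)
  then obtain S where S: "homog i S" "S P0 = of_nat (Suc i) * b"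
    "\<forall>x y z. (x + b * y) ^ Suc i - x ^ Suc i = y * S (x, y, z :: 'a)" by blast
  define S' where "S' v = (fst v + b * fst (snd v)) * S v + b * fst v ^ Suc i" for v :: "'a pt"
  have "homog (1 + i) (\<lambda>v. (fst v + b * fst (snd v)) * S v)"
    using homog_mult[OF homog_linear S(1), of 1 b] by simp
  then have "homog (Suc i) S'"
    unfolding S'_def using homog_add homog_smult[OF homog_power[OF homog_X]] by fastforce
  moreover have "S' P0 = of_nat (Suc (Suc i)) * b" using S(2) by (simp add: S'_def P0_def algebra_simps)
  moreover have "(x + b * y) ^ Suc (Suc i) - x ^ Suc (Suc i) = y * S' (x, y, z)" for x y z
  proof -
    have "(x + b * y) ^ Suc (Suc i) - x ^ Suc (Suc i)
        = (x + b * y) * ((x + b * y) ^ Suc i - x ^ Suc i) + b * y * x ^ Suc i"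
      by (simp add: algebra_simps)
    also have "\<dots> = (x + b * y) * (y * S (x, y, z)) + b * y * x ^ Suc i"
      using S(3)[rule_format, of x y z] by simp
    also have "\<dots> = y * S' (x, y, z)" by (simp add: S'_def algebra_simps)
    finally show ?thesis .
  qed
  ultimately show ?case by blast
qed

lemma homog_unipotent_diff:
  "homog n f \<Longrightarrow> \<exists>Q. homog (n - 1) Q \<and> Q P0 = of_nat n * b * f P0 \<and>
     (\<forall>v. f (act (1, b, 0, 1) v) - f v = fst (snd v) * Q v)"
proof (induction rule: homog.induct)
  case (homog_monom i j d c)
  show ?case
  proof (cases i)
    case 0
    then show ?thesis using homog_monom
      by (intro exI[of _ "\<lambda>v. 0"]) (auto intro: gr0I simp: P0_def act_def homog_zero split: prod.splits)
  next
    case (Suc i')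
    obtain S where S: "homog i' S" "S P0 = of_nat i * b"
      "\<forall>x y z. (x + b * y) ^ i - x ^ i = y * S (x, y, z :: 'a)"
      using power_shift_diff[of i' b] Suc by auto
    define Q where "Q v = c * S v * fst (snd v) ^ j * snd (snd v) ^ (d - i - j)" for v :: "'a pt"
    have "homog (i' + j + (d - i - j)) (\<lambda>v. S v * fst (snd v) ^ j * snd (snd v) ^ (d - i - j))"
      by (intro homog_mult homog_power S(1) homog_Y homog_Z)
    then have "homog (d - 1) Q"
      unfolding Q_def using homog_smult homog_monom Suc by (fastforce simp: mult.assoc)
    moreover have "Q P0 = of_nat d * b * (c * fst P0 ^ i * fst (snd P0) ^ j * snd (snd P0) ^ (d - i - j))"
      using S(2) homog_monom by (cases "j = 0 \<and> d - i - j = 0") (auto simp: Q_def P0_def)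
    moreover have "c * (x + b * y) ^ i * y ^ j * z ^ (d - i - j) - c * x ^ i * y ^ j * z ^ (d - i - j)
        = y * Q (x, y, z)" for x y z
    proof -
      have "c * (x + b * y) ^ i * y ^ j * z ^ (d - i - j) - c * x ^ i * y ^ j * z ^ (d - i - j)
          = c * ((x + b * y) ^ i - x ^ i) * y ^ j * z ^ (d - i - j)" by (simp add: algebra_simps)
      also have "\<dots> = c * (y * S (x, y, z)) * y ^ j * z ^ (d - i - j)"
        using S(3)[rule_format, of x y z] by simp
      also have "\<dots> = y * Q (x, y, z)" by (simp add: Q_def algebra_simps)
      finally show ?thesis .
    qed
    ultimately show ?thesis by (intro exI[of _ Q]) (auto simp: act_def)
  qed
next
  case (homog_add d f g)
  then obtain Q1 Q2 where "homog (d - 1) Q1" "Q1 P0 = of_nat d * b * f P0"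
      "\<forall>v. f (act (1, b, 0, 1) v) - f v = fst (snd v) * Q1 v"
    "homog (d - 1) Q2" "Q2 P0 = of_nat d * b * g P0"
      "\<forall>v. g (act (1, b, 0, 1) v) - g v = fst (snd v) * Q2 v"
    by blast
  then show ?case
    by (intro exI[of _ "\<lambda>v. Q1 v + Q2 v"]) (auto intro: homog.homog_add simp: algebra_simps)
qed

lemma homog_decompose:
  "homog n f \<Longrightarrow> \<exists>A1 A2. homog (n - 1) A1 \<and> homog (n - 1) A2 \<and>
     (\<forall>v. f v = fst (snd v) * A1 v + snd (snd v) * A2 v + f P0 * fst v ^ n)"
proof (induction rule: homog.induct)
  case (homog_monom i j d c)
  define k where "k = d - i - j"
  consider "j \<ge> 1" | "j = 0" "k \<ge> 1" | "j = 0" "k = 0" by linarith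
  then show ?case
  proof cases
    case 1
    have "homog (d - 1) (\<lambda>v. c * fst v ^ i * fst (snd v) ^ (j - 1) * snd (snd v) ^ ((d - 1) - i - (j - 1)))"
      using homog_monom 1 by (intro homog.homog_monom) auto
    moreover have "y ^ j = y * y ^ (j - 1)" for y :: 'a using 1 by (simp flip: power_Suc)
    ultimately show ?thesis using 1 homog_monom
      by (intro exI[of _ "\<lambda>v. c * fst v ^ i * fst (snd v) ^ (j - 1) * snd (snd v) ^ k"] exI[of _ "\<lambda>v. 0"])
         (auto simp: k_def P0_def homog_zero)
  next
    case 2
    have "homog (d - 1) (\<lambda>v. c * fst v ^ i * fst (snd v) ^ 0 * snd (snd v) ^ ((d - 1) - i - 0))"
      using homog_monom 2 by (intro homog.homog_monom) (auto simp: k_def)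
    moreover have "z ^ k = z * z ^ (k - 1)" for z :: 'a using 2 by (simp flip: power_Suc)
    ultimately show ?thesis using 2 homog_monom
      by (intro exI[of _ "\<lambda>v. 0"] exI[of _ "\<lambda>v. c * fst v ^ i * snd (snd v) ^ (k - 1)"])
         (auto simp: k_def P0_def homog_zero)
  next
    case 3
    then show ?thesis using homog_monom
      by (intro exI[of _ "\<lambda>v. 0"] exI[of _ "\<lambda>v. 0"]) (auto simp: k_def P0_def homog_zero)
  qed
next
  case (homog_add d f g)
  then obtain A1 A2 B1 B2 where "homog (d - 1) A1" "homog (d - 1) A2"
      "\<forall>v. f v = fst (snd v) * A1 v + snd (snd v) * A2 v + f P0 * fst v ^ d"
    "homog (d - 1) B1" "homog (d - 1) B2"
      "\<forall>v. g v = fst (snd v) * B1 v + snd (snd v) * B2 v + g P0 * fst v ^ d"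
    by blast
  then show ?case
    by (intro exI[of _ "\<lambda>v. A1 v + B1 v"] exI[of _ "\<lambda>v. A2 v + B2 v"])
       (auto intro: homog.homog_add simp: algebra_simps)
qed

section \<open>Polynomial functions of one variable and order of vanishing at 0\<close>

definition polyfun :: "('a::field \<Rightarrow> 'a) \<Rightarrow> bool" where
  "polyfun f \<longleftrightarrow> (\<exists>q. \<forall>z. f z = poly q z)"

lemma polyfun_poly: "polyfun (poly q)"
  unfolding polyfun_def by blast

lemma polyfun_const: "polyfun (\<lambda>z. c)"
  unfolding polyfun_def by (rule exI[of _ "[:c:]"]) auto

lemma polyfun_id: "polyfun (\<lambda>z. z)"
  unfolding polyfun_def by (rule exI[of _ "[:0, 1:]"]) auto

lemma polyfun_add: "polyfun f \<Longrightarrow> polyfun g \<Longrightarrow> polyfun (\<lambda>z. f z + g z)"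
  unfolding polyfun_def by (metis poly_add)

lemma polyfun_mult: "polyfun f \<Longrightarrow> polyfun g \<Longrightarrow> polyfun (\<lambda>z. f z * g z)"
  unfolding polyfun_def by (metis poly_mult)

lemma polyfun_power: "polyfun f \<Longrightarrow> polyfun (\<lambda>z. f z ^ n)"
  unfolding polyfun_def by (metis poly_power)

lemma polyfun_uminus: "polyfun f \<Longrightarrow> polyfun (\<lambda>z. - f z)"
  unfolding polyfun_def by (metis poly_minus)

lemma polyfun_diff: "polyfun f \<Longrightarrow> polyfun g \<Longrightarrow> polyfun (\<lambda>z. f z - g z)"
  unfolding polyfun_def by (metis poly_diff)

lemmas polyfun_intros =
  polyfun_poly polyfun_const polyfun_id polyfun_add polyfun_mult polyfun_power polyfun_uminus polyfun_diff

lemma polyfun_expand_at_0: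
  assumes "polyfun f"
  obtains g where "polyfun g" "\<And>z. f z = f 0 + z * g z"
proof -
  obtain q where "\<And>z. f z = poly q z" using assms unfolding polyfun_def by blast
  moreover obtain a r where "q = pCons a r" by (cases q) auto
  ultimately show ?thesis using that[of "poly r"] by (auto simp: polyfun_poly)
qed

lemma polyfun_eq_0_at_0:
  fixes f :: "'a::field \<Rightarrow> 'a"
  assumes "infinite (UNIV :: 'a set)" "polyfun f" "\<And>z. z \<noteq> 0 \<Longrightarrow> f z = 0"
  shows "f 0 = 0"
proof -
  obtain q where q: "\<And>z. f z = poly q z" using assms(2) unfolding polyfun_def by blast
  have "q = 0"
  proof (rule ccontr)
    assume "q \<noteq> 0"
    have "UNIV - {0} \<subseteq> {z. poly q z = 0}" using assms(3) q by auto
    from finite_subset[OF this poly_roots_finite[OF \<open>q \<noteq> 0\<close>]] show False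
      using assms(1) by simp
  qed
  then show ?thesis using q by simp
qed

definition vanishes_to_order :: "nat \<Rightarrow> ('a::field \<Rightarrow> 'a) \<Rightarrow> bool" where
  "vanishes_to_order n f \<longleftrightarrow> (\<exists>q. polyfun q \<and> (\<forall>z. f z = z ^ n * q z))"

lemma vanishes_to_order_0: "polyfun f \<Longrightarrow> vanishes_to_order 0 f"
  unfolding vanishes_to_order_def by auto

lemma vanishes_to_order_zero: "vanishes_to_order n (\<lambda>z. 0)"
  unfolding vanishes_to_order_def by (auto intro: polyfun_const)

lemma vanishes_to_order_1: "polyfun f \<Longrightarrow> f 0 = 0 \<Longrightarrow> vanishes_to_order 1 f"
  unfolding vanishes_to_order_def by (metis add_0 polyfun_expand_at_0 power_one_right)

lemma vanishes_to_order_mono: "vanishes_to_order n f \<Longrightarrow> m \<le> n \<Longrightarrow> vanishes_to_order m f"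
proof -
  assume "vanishes_to_order n f" "m \<le> n"
  then obtain q where q: "polyfun q" "\<And>z. f z = z ^ n * q z" unfolding vanishes_to_order_def by blast
  have "polyfun (\<lambda>z. z ^ (n - m) * q z)" using q(1) by (intro polyfun_intros)
  moreover have "z ^ n = z ^ m * z ^ (n - m)" for z :: 'a using \<open>m \<le> n\<close> by (simp flip: power_add)
  ultimately show ?thesis unfolding vanishes_to_order_def using q(2) by (auto simp: mult.assoc)
qed

lemma vanishes_to_order_add:
  "vanishes_to_order n f \<Longrightarrow> vanishes_to_order n g \<Longrightarrow> vanishes_to_order n (\<lambda>z. f z + g z)"
  unfolding vanishes_to_order_def by (auto intro!: polyfun_intros simp: distrib_left)

lemma vanishes_to_order_mult:
  "vanishes_to_order m f \<Longrightarrow> vanishes_to_order n g \<Longrightarrow> vanishes_to_order (m + n) (\<lambda>z. f z * g z)"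
proof -
  assume "vanishes_to_order m f" "vanishes_to_order n g"
  then obtain q r where "polyfun q" "\<And>z. f z = z ^ m * q z" "polyfun r" "\<And>z. g z = z ^ n * r z"
    unfolding vanishes_to_order_def by blast
  then show ?thesis unfolding vanishes_to_order_def
    by (intro exI[of _ "\<lambda>z. q z * r z"] conjI polyfun_mult) (auto simp: power_add ac_simps)
qed

lemma vanishes_to_order_cancel:
  fixes f g :: "'a::field \<Rightarrow> 'a"
  assumes "infinite (UNIV :: 'a set)" "polyfun g" "g 0 \<noteq> 0"
  shows "polyfun f \<Longrightarrow> vanishes_to_order n (\<lambda>z. f z * g z) \<Longrightarrow> vanishes_to_order n f"
proof (induction n arbitrary: f)
  case 0
  then show ?case by (simp add: vanishes_to_order_0)
next
  case (Suc n)
  obtain r where r: "polyfun r" "\<And>z. f z * g z = z ^ Suc n * r z"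
    using Suc.prems(2) unfolding vanishes_to_order_def by blast
  then have "f 0 = 0" using assms(3) by (metis mult_eq_0_iff power_0_Suc)
  obtain f' where f': "polyfun f'" "\<And>z. f z = f 0 + z * f' z"
    using polyfun_expand_at_0[OF Suc.prems(1)] by blast
  have "f' z * g z - z ^ n * r z = 0" for z
  proof (cases "z = 0")
    case True
    have "polyfun (\<lambda>z. f' z * g z - z ^ n * r z)" using f' r assms by (intro polyfun_intros)
    moreover have "f' z * g z - z ^ n * r z = 0" if "z \<noteq> 0" for z
      using r(2)[of z] f'(2)[of z] \<open>f 0 = 0\<close> that by (simp add: algebra_simps)
    ultimately show ?thesis using True polyfun_eq_0_at_0[OF assms(1)] by blast
  next
    case False
    then show ?thesis using r(2)[of z] f'(2)[of z] \<open>f 0 = 0\<close> by (simp add: algebra_simps)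
  qed
  then have "vanishes_to_order n (\<lambda>z. f' z * g z)"
    unfolding vanishes_to_order_def using r by auto
  from Suc.IH[OF f'(1) this] show ?case
    unfolding vanishes_to_order_def using f' \<open>f 0 = 0\<close> by (auto simp: mult.assoc)
qed

lemma vanishes_to_order_Suc_0:
  fixes f :: "'a::field \<Rightarrow> 'a"
  assumes "infinite (UNIV :: 'a set)" "polyfun f"
    and "vanishes_to_order (Suc n) (\<lambda>z. z ^ n * f z)"
  shows "f 0 = 0"
proof -
  obtain q where q: "polyfun q" "\<And>z. z ^ n * f z = z ^ Suc n * q z"
    using assms(3) unfolding vanishes_to_order_def by blast
  have "polyfun (\<lambda>z. f z - z * q z)" using assms(2) q(1) by (intro polyfun_intros)
  moreover have "f z - z * q z = 0" if "z \<noteq> 0" for z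
    using q(2)[of z] that by (simp add: algebra_simps)
  ultimately have "f 0 - 0 * q 0 = 0" using polyfun_eq_0_at_0[OF assms(1)] by blast
  then show ?thesis by simp
qed

lemma homog_polyfun:
  "homog d f \<Longrightarrow> polyfun U \<Longrightarrow> polyfun V \<Longrightarrow> polyfun W \<Longrightarrow> polyfun (\<lambda>z. f (U z, V z, W z))"
proof (induction rule: homog.induct)
  case (homog_monom i j d c)
  then show ?case by (simp, intro polyfun_intros)
next
  case (homog_add d f g)
  then show ?case using polyfun_add[of "\<lambda>z. f (U z, V z, W z)" "\<lambda>z. g (U z, V z, W z)"] by simp
qed

section \<open>The affine curve and its approximate branch\<close>

(* G is a polynomial in y whose coefficients are polynomials in z. *)
definition poly2 :: "'a::comm_semiring_0 poly poly \<Rightarrow> 'a \<Rightarrow> 'a \<Rightarrow> 'a" where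
  "poly2 G y z = poly (poly G [:y:]) z"

lemma poly2_add [simp]: "poly2 (G + H) y z = poly2 G y z + poly2 H y z"
  by (simp add: poly2_def)

lemma poly2_mult [simp]: "poly2 (G * H) y z = poly2 G y z * poly2 H y z"
  by (simp add: poly2_def)

lemma poly_poly_eq_poly2: "poly (poly H Y) z = poly2 H (poly Y z) z"
  by (induction H) (auto simp: poly2_def)

lemma poly_map_poly_eq_poly2: "poly (map_poly (\<lambda>q. poly q z) G) y = poly2 G y z"
  by (induction G) (auto simp: poly2_def map_poly_pCons)

lemma homog_dehomogenize: "homog d f \<Longrightarrow> \<exists>G. \<forall>y z. f (1, y, z) = poly2 G y z"
proof (induction rule: homog.induct)
  case (homog_monom i j d c)
  show ?case
    by (rule exI[of _ "[:[:c:]:] * [:0, 1:] ^ j * [:[:0, 1:] ^ (d - i - j):]"])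
       (simp add: poly2_def poly_power)
next
  case (homog_add d f g)
  then obtain G H where "\<forall>y z. f (1, y, z) = poly2 G y z" "\<forall>y z. g (1, y, z) = poly2 H y z"
    by blast
  then show ?case by (intro exI[of _ "G + H"]) simp
qed

lemma artin_schreier_shift:
  assumes "prime CHAR('a::comm_ring_1)"
  shows "(r + of_nat k) ^ CHAR('a) - (r + of_nat k) = (r :: 'a) ^ CHAR('a) - r"
proof (induction k)
  case (Suc k)
  have "(r + of_nat k + 1) ^ CHAR('a) = (r + of_nat k) ^ CHAR('a) + 1"
    using freshmans_dream[OF assms refl, of "r + of_nat k" 1] by simp
  then show ?case using Suc by (simp add: algebra_simps)
qed simp

lemma alg_closed_infinite:
  assumes "alg_closed TYPE('a::field)"
  shows "infinite (UNIV :: 'a set)"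
proof
  assume fin: "finite (UNIV :: 'a set)"
  define f :: "'a poly" where "f = (\<Prod>a\<in>UNIV. [:- a, 1:])"
  have "degree f = card (UNIV :: 'a set)"
    unfolding f_def by (subst degree_prod_eq_sum_degree) auto
  then have "degree (f + 1) > 0"
    using fin by (metis add.commute degree_1 degree_add_eq_right finite_UNIV_card_ge_0)
  then obtain x where "poly (f + 1) x = 0"
    using assms unfolding alg_closed_def by blast
  moreover have "poly f x = 0"
    unfolding f_def poly_prod using fin by (intro prod_zero) auto
  ultimately show False by simp
qed

lemma artin_schreier_root_exists:
  fixes c :: "'a::field"
  assumes "alg_closed TYPE('a)" "p \<ge> 2"
  obtains r where "r ^ p - r = c"
proof -
  define f :: "'a poly" where "f = monom 1 p - [:c, 1:]"
  have "degree [:c, 1::'a:] < degree (monom (1::'a) p)"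
    using assms(2) by (simp add: degree_monom_eq)
  then have "degree f = p" unfolding f_def
    by (metis degree_add_eq_left degree_minus degree_monom_eq diff_conv_add_uminus one_neq_zero)
  then obtain r where "poly f r = 0"
    using assms unfolding alg_closed_def by (metis not_numeral_le_zero zero_less_iff_neq_zero)
  then show ?thesis using that by (simp add: f_def poly_monom algebra_simps)
qed

lemma poly_eq_0_if_roots_in_prime_field_coset:
  fixes f :: "'a::field poly"
  assumes "degree f < CHAR('a)" "\<And>k. k < CHAR('a) \<Longrightarrow> poly f (r + of_nat k) = 0"
  shows "f = 0"
proof (rule ccontr)
  assume "f \<noteq> 0"
  have "inj_on (\<lambda>k. r + (of_nat k :: 'a)) {..<CHAR('a)}"
    by (rule inj_onI) (auto simp: of_nat_eq_iff_cong_CHAR dest: cong_less_modulus_unique_nat)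
  then have "CHAR('a) = card ((\<lambda>k. r + of_nat k) ` {..<CHAR('a)})"
    by (simp add: card_image)
  also have "\<dots> \<le> card {x. poly f x = 0}"
    using assms(2) poly_roots_finite[OF \<open>f \<noteq> 0\<close>] by (intro card_mono) auto
  also have "\<dots> \<le> degree f" by (rule card_poly_roots_bound[OF \<open>f \<noteq> 0\<close>])
  finally show False using assms(1) by simp
qed

definition curve_poly :: "nat \<Rightarrow> 'a::comm_ring_1 poly poly" where
  "curve_poly p = monom 1 p - [:0, 1:] - [:monom 1 (Suc p):]"

lemma poly2_curve_poly: "poly2 (curve_poly p) y z = y ^ p - y - z ^ Suc p"
  by (simp add: curve_poly_def poly2_def poly_monom)

lemma curve_poly_monic:
  assumes "p \<ge> 2"
  shows "degree (curve_poly p :: 'a::field poly poly) = p" "lead_coeff (curve_poly p :: 'a::field poly poly) = 1"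
proof -
  have "degree ([:0, 1:] + [:monom (1::'a) (Suc p):]) < degree (monom (1::'a poly) p)"
    using assms by (auto simp: degree_monom_eq intro: le_less_trans[OF degree_add_le])
  moreover have "curve_poly p = monom (1::'a poly) p - ([:0, 1:] + [:monom 1 (Suc p):])"
    by (simp add: curve_poly_def)
  ultimately show deg: "degree (curve_poly p :: 'a poly poly) = p"
    by (metis degree_add_eq_left degree_minus degree_monom_eq diff_conv_add_uminus one_neq_zero)
  obtain m where "p = Suc (Suc m)" using assms by (metis add_2_eq_Suc le_Suc_ex)
  then have "coeff (curve_poly p :: 'a poly poly) p = 1" by (simp add: curve_poly_def)
  then show "lead_coeff (curve_poly p :: 'a poly poly) = 1" by (simp add: deg)
qed

lemma poly2_eq_0_if_vanishes_on_curve: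
  assumes "prime p" "CHAR('a::field) = p" "alg_closed TYPE('a)" "degree R < p"
    and vanish: "\<And>y z. y ^ p - y = z ^ Suc p \<Longrightarrow> poly2 R y z = (0::'a)"
  shows "poly2 R y z = 0"
proof -
  (* for fixed z, R has degree < p in y but vanishes at the p roots r + k *)
  have p2: "p \<ge> 2" using assms(1) prime_ge_2_nat by blast
  define Rz where "Rz = map_poly (\<lambda>q. poly q z) R"
  obtain r where r: "r ^ p - r = z ^ Suc p" using artin_schreier_root_exists[OF assms(3) p2] .
  have "poly Rz (r + of_nat k) = 0" for k
    using artin_schreier_shift[of r k] assms(1,2) r by (simp add: vanish Rz_def poly_map_poly_eq_poly2)
  moreover have "degree Rz < CHAR('a)"
    using assms(2,4) map_poly_degree_leq[of "\<lambda>q. poly q z" R] unfolding Rz_def by linarith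
  ultimately have "Rz = 0" using poly_eq_0_if_roots_in_prime_field_coset by blast
  then show ?thesis by (simp flip: poly_map_poly_eq_poly2 add: Rz_def)
qed

lemma vanishes_on_curve_imp_vanishes_to_order:
  assumes "prime p" "CHAR('a::field) = p" "alg_closed TYPE('a)"
    and vanish: "\<And>y z. y ^ p - y = z ^ Suc p \<Longrightarrow> poly2 G y z = (0::'a)"
  shows "vanishes_to_order (p * Suc p) (\<lambda>z. poly2 G (- (z ^ Suc p)) z)"
proof -
  have p2: "p \<ge> 2" using assms(1) prime_ge_2_nat by blast
  note monic = curve_poly_monic[OF p2, where 'a = 'a]
  have lc: "coeff (curve_poly p :: 'a poly poly) p = 1" using monic by simp
  obtain H R where HR: "pseudo_divmod G (curve_poly p) = (H, R)"
    by (cases "pseudo_divmod G (curve_poly p)") auto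
  have nz: "curve_poly p \<noteq> (0 :: 'a poly poly)" using monic p2 by auto
  have GHR: "G = curve_poly p * H + R"
    using pseudo_divmod(1)[OF nz HR] by (simp add: monic lc)
  have "degree R < p"
    using pseudo_divmod(2)[OF nz HR] p2 by (auto simp: monic)
  moreover have "poly2 R y z = 0" if "y ^ p - y = z ^ Suc p" for y z
    using vanish[OF that] that GHR by (simp add: poly2_curve_poly)
  ultimately have R0: "poly2 R y z = 0" for y z
    using poly2_eq_0_if_vanishes_on_curve[OF assms(1-3)] by blast
  define Y :: "'a poly" where "Y = - monom 1 (Suc p)"
  have "poly2 G (- (z ^ Suc p)) z = z ^ (p * Suc p) * ((- 1) ^ p * poly (poly H Y) z)" for z :: 'a
  proof -
    have "poly2 G (- (z ^ Suc p)) z = (- (z ^ Suc p)) ^ p * poly2 H (- (z ^ Suc p)) z"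
      using GHR R0 by (simp add: poly2_curve_poly)
    also have "(- (z ^ Suc p)) ^ p = (- 1) ^ p * z ^ (p * Suc p)"
      by (metis power_minus power_mult mult.commute)
    also have "poly2 H (- (z ^ Suc p)) z = poly (poly H Y) z"
      by (simp add: poly_poly_eq_poly2 Y_def poly_monom)
    finally show ?thesis by (simp add: algebra_simps)
  qed
  moreover have "polyfun (\<lambda>z. (- 1) ^ p * poly (poly H Y) z)"
    by (intro polyfun_intros)
  ultimately show ?thesis unfolding vanishes_to_order_def by blast
qed

(* The approximate branch; it satisfies the curve equation up to the term y^p = (-z^(p+1))^p. *)
definition branch :: "nat \<Rightarrow> 'a::field \<Rightarrow> 'a pt" where
  "branch p z = (1, - (z ^ Suc p), z)"

lemma branch_0 [simp]: "branch p 0 = P0"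
  by (simp add: branch_def P0_def)

lemma homog_polyfun_branch: "homog d f \<Longrightarrow> polyfun (\<lambda>z. f (branch p z))"
  unfolding branch_def by (intro homog_polyfun polyfun_intros)

section \<open>The local ring at P0\<close>

definition homog_rep :: "'a::field rep \<Rightarrow> bool" where
  "homog_rep r \<longleftrightarrow> (\<exists>d. homog d (fst r) \<and> homog d (snd r))"

lemma homog_rep_rmul: "homog_rep r \<Longrightarrow> homog_rep s \<Longrightarrow> homog_rep (rmul r s)"
  unfolding homog_rep_def rmul_def using homog_mult by fastforce

lemma homog_rep_cross_terms:
  assumes "homog_rep r" "homog_rep s"
  obtains d where "homog d (\<lambda>v. fst r v * snd s v)" "homog d (\<lambda>v. fst s v * snd r v)"
    "homog d (\<lambda>v. snd r v * snd s v)"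
proof -
  obtain d e where r: "homog d (fst r)" "homog d (snd r)" and s: "homog e (fst s)" "homog e (snd s)"
    using assms unfolding homog_rep_def by blast
  have "homog (d + e) (\<lambda>v. fst s v * snd r v)" using homog_mult[OF s(1) r(2)] by (simp add: add.commute)
  with homog_mult[OF r(1) s(2)] homog_mult[OF r(2) s(2)] show ?thesis using that by blast
qed

lemma homog_rep_radd: "homog_rep r \<Longrightarrow> homog_rep s \<Longrightarrow> homog_rep (radd r s)"
  by (erule homog_rep_cross_terms) (auto simp: homog_rep_def radd_def intro: homog_add)

lemma homog_rep_rsub: "homog_rep r \<Longrightarrow> homog_rep s \<Longrightarrow> homog_rep (rsub r s)"
  by (erule homog_rep_cross_terms) (auto simp: homog_rep_def rsub_def intro: homog_diff)

lemma homog_rep_pull: "homog_rep r \<Longrightarrow> homog_rep (pull g r)"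
  unfolding homog_rep_def pull_def using homog_comp_act by (fastforce simp: comp_def)

lemma homog_rep_rone: "homog_rep rone"
  unfolding homog_rep_def rone_def by (auto intro: homog_const)

lemma homog_rep_rzero: "homog_rep rzero"
  unfolding homog_rep_def rzero_def by (auto intro: homog_const homog_zero)

lemma on_C_P0: "p > 0 \<Longrightarrow> on_C p P0"
  by (simp add: on_C_def P0_def)

lemma on_C_affine: "on_C p (1, y, z) \<longleftrightarrow> y ^ p - y = z ^ Suc p"
  by (simp add: on_C_def)

lemma local_ring_P0_iff:
  "p > 0 \<Longrightarrow> r \<in> local_ring p P0 \<longleftrightarrow> homog_rep r \<and> snd r P0 \<noteq> 0"
  unfolding local_ring_def ratfun_def homog_rep_def hpoly_iff_homog using on_C_P0 by blast

lemma max_ideal_P0_iff: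
  "p > 0 \<Longrightarrow> r \<in> max_ideal p P0 \<longleftrightarrow> homog_rep r \<and> snd r P0 \<noteq> 0 \<and> fst r P0 = 0"
  unfolding max_ideal_def using local_ring_P0_iff by blast

lemma local_ring_rone: "p > 0 \<Longrightarrow> rone \<in> local_ring p P0"
  by (simp add: local_ring_P0_iff homog_rep_rone) (simp add: rone_def)

lemma local_ring_rzero: "p > 0 \<Longrightarrow> rzero \<in> local_ring p P0"
  by (simp add: local_ring_P0_iff homog_rep_rzero) (simp add: rzero_def)

lemma local_ring_rmul:
  "p > 0 \<Longrightarrow> r \<in> local_ring p P0 \<Longrightarrow> s \<in> local_ring p P0 \<Longrightarrow> rmul r s \<in> local_ring p P0"
  by (simp add: local_ring_P0_iff homog_rep_rmul) (simp add: rmul_def)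

lemma local_ring_radd:
  "p > 0 \<Longrightarrow> r \<in> local_ring p P0 \<Longrightarrow> s \<in> local_ring p P0 \<Longrightarrow> radd r s \<in> local_ring p P0"
  by (simp add: local_ring_P0_iff homog_rep_radd) (simp add: radd_def)

lemma local_ring_rprodn:
  "p > 0 \<Longrightarrow> (\<And>l. l < n \<Longrightarrow> r l \<in> local_ring p P0) \<Longrightarrow> rprodn r n \<in> local_ring p P0"
  by (induction n) (auto intro: local_ring_rmul local_ring_rone)

lemma local_ring_rsumn:
  "p > 0 \<Longrightarrow> (\<And>j. j < k \<Longrightarrow> f j \<in> local_ring p P0) \<Longrightarrow> rsumn f k \<in> local_ring p P0"
  by (induction k) (auto intro: local_ring_radd local_ring_rzero)

definition branch_vanishes :: "nat \<Rightarrow> nat \<Rightarrow> 'a::field rep \<Rightarrow> bool" where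
  "branch_vanishes p n r \<longleftrightarrow> vanishes_to_order n (\<lambda>z. fst r (branch p z))"

lemma branch_vanishes_0: "homog_rep r \<Longrightarrow> branch_vanishes p 0 r"
  unfolding branch_vanishes_def homog_rep_def by (auto intro: vanishes_to_order_0 homog_polyfun_branch)

lemma branch_vanishes_max_ideal:
  assumes "r \<in> max_ideal p P0"
  shows "branch_vanishes p 1 r"
proof -
  obtain d where "homog d (fst r)" "fst r P0 = 0"
    using assms unfolding max_ideal_def local_ring_def ratfun_def hpoly_iff_homog by blast
  then show ?thesis
    unfolding branch_vanishes_def by (intro vanishes_to_order_1 homog_polyfun_branch) auto
qed

lemma branch_vanishes_mono: "branch_vanishes p n r \<Longrightarrow> m \<le> n \<Longrightarrow> branch_vanishes p m r"
  unfolding branch_vanishes_def by (rule vanishes_to_order_mono)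

lemma branch_vanishes_rmul:
  "branch_vanishes p m r \<Longrightarrow> branch_vanishes p n s \<Longrightarrow> branch_vanishes p (m + n) (rmul r s)"
  unfolding branch_vanishes_def rmul_def by (simp add: vanishes_to_order_mult)

lemma branch_vanishes_radd:
  assumes "homog_rep r" "homog_rep s" "branch_vanishes p n r" "branch_vanishes p n s"
  shows "branch_vanishes p n (radd r s)"
proof -
  have "vanishes_to_order 0 (\<lambda>z. snd r (branch p z))" "vanishes_to_order 0 (\<lambda>z. snd s (branch p z))"
    using assms(1,2) unfolding homog_rep_def by (auto intro: vanishes_to_order_0 homog_polyfun_branch)
  with assms(3,4) have "vanishes_to_order (n + 0) (\<lambda>z. fst r (branch p z) * snd s (branch p z))"
    "vanishes_to_order (n + 0) (\<lambda>z. fst s (branch p z) * snd r (branch p z))"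
    unfolding branch_vanishes_def by (simp_all only: vanishes_to_order_mult)
  then show ?thesis unfolding branch_vanishes_def radd_def by (simp add: vanishes_to_order_add)
qed

lemma branch_vanishes_rprodn:
  "(\<And>l. l < n \<Longrightarrow> r l \<in> max_ideal p P0) \<Longrightarrow> branch_vanishes p n (rprodn r n)"
proof (induction n)
  case 0
  then show ?case by (simp add: branch_vanishes_0 homog_rep_rone)
next
  case (Suc n)
  then have "branch_vanishes p (n + 1) (rmul (rprodn r n) (r n))"
    by (intro branch_vanishes_rmul branch_vanishes_max_ideal) auto
  then show ?case by simp
qed

lemma branch_vanishes_rsumn:
  assumes "p > 0" "\<And>j. j < k \<Longrightarrow> f j \<in> local_ring p P0 \<and> branch_vanishes p n (f j)"
  shows "branch_vanishes p n (rsumn f k)"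
  using assms(2)
proof (induction k)
  case 0
  then show ?case by (simp add: branch_vanishes_def rzero_def vanishes_to_order_zero)
next
  case (Suc k)
  have "rsumn f k \<in> local_ring p P0" using Suc.prems by (intro local_ring_rsumn[OF assms(1)]) auto
  then have "homog_rep (rsumn f k)" "homog_rep (f k)"
    using Suc.prems[of k] local_ring_P0_iff[OF assms(1)] by blast+
  then show ?case using Suc by (simp add: branch_vanishes_radd)
qed

lemma branch_vanishes_feq:
  assumes "prime p" "CHAR('a::field) = p" "alg_closed TYPE('a)"
    and h: "homog_rep (h :: 'a rep)" and s: "s \<in> local_ring p P0"
    and "feq p h s" "branch_vanishes p m s" "m \<le> p * Suc p"
  shows "branch_vanishes p m h"
proof -
  have "p > 0" using assms(1) prime_gt_0_nat by blast
  then have s': "homog_rep s" "snd s P0 \<noteq> 0" using s local_ring_P0_iff by blast+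
  obtain dh ds where dh: "homog dh (fst h)" "homog dh (snd h)" and ds: "homog ds (snd s)"
    using h s'(1) unfolding homog_rep_def by blast
  define F where "F v = fst h v * snd s v - fst s v * snd h v" for v
  have "homog_rep (rsub h s)" using h s'(1) by (rule homog_rep_rsub)
  then obtain d where "homog d F" unfolding homog_rep_def rsub_def F_def by auto
  then obtain G where G: "\<And>y z. F (1, y, z) = poly2 G y z" using homog_dehomogenize by blast
  have "poly2 G y z = 0" if "y ^ p - y = z ^ Suc p" for y z
    using \<open>feq p h s\<close> that G[of y z] unfolding feq_def F_def by (simp add: on_C_affine)
  then have "vanishes_to_order (p * Suc p) (\<lambda>z. F (branch p z))"
    using vanishes_on_curve_imp_vanishes_to_order[OF assms(1-3)] G by (simp add: branch_def)
  then have "vanishes_to_order m (\<lambda>z. F (branch p z))" using assms(8) by (rule vanishes_to_order_mono)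
  moreover have "vanishes_to_order (m + 0) (\<lambda>z. fst s (branch p z) * snd h (branch p z))"
    using assms(7) vanishes_to_order_0[OF homog_polyfun_branch[OF dh(2)]]
    unfolding branch_vanishes_def by (rule vanishes_to_order_mult)
  ultimately have "vanishes_to_order m
      (\<lambda>z. F (branch p z) + fst s (branch p z) * snd h (branch p z))"
    by (simp add: vanishes_to_order_add)
  then have "vanishes_to_order m (\<lambda>z. fst h (branch p z) * snd s (branch p z))"
    by (simp add: F_def)
  then show ?thesis unfolding branch_vanishes_def
    using vanishes_to_order_cancel[OF alg_closed_infinite[OF assms(3)]
        homog_polyfun_branch[OF ds] _ homog_polyfun_branch[OF dh(1)]] s'(2)
    by simp
qed

lemma in_mpow_imp_branch_vanishes:
  assumes "prime p" "CHAR('a::field) = p" "alg_closed TYPE('a)" "in_mpow p P0 n (h :: 'a rep)"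
  shows "branch_vanishes p (min n (p * Suc p)) h"
proof -
  have p: "p > 0" using assms(1) prime_gt_0_nat by blast
  from assms(4) obtain k s r where h: "h \<in> local_ring p P0"
    and sr: "\<forall>j<k. s j \<in> local_ring p P0 \<and> (\<forall>l<n. r j l \<in> max_ideal p P0)"
    and feq: "feq p h (rsumn (\<lambda>j. rmul (s j) (rprodn (r j) n)) k)"
    unfolding in_mpow_def by blast
  have summand: "rmul (s j) (rprodn (r j) n) \<in> local_ring p P0 \<and>
      branch_vanishes p n (rmul (s j) (rprodn (r j) n))" if "j < k" for j
  proof
    have sj: "s j \<in> local_ring p P0" and rj: "\<And>l. l < n \<Longrightarrow> r j l \<in> max_ideal p P0"
      using sr that by auto
    then have "rprodn (r j) n \<in> local_ring p P0"
      by (intro local_ring_rprodn[OF p]) (auto simp: max_ideal_def)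
    with sj show "rmul (s j) (rprodn (r j) n) \<in> local_ring p P0" by (rule local_ring_rmul[OF p])
    have "homog_rep (s j)" using sj local_ring_P0_iff[OF p] by blast
    then have "branch_vanishes p (0 + n) (rmul (s j) (rprodn (r j) n))"
      by (rule branch_vanishes_rmul[OF branch_vanishes_0 branch_vanishes_rprodn[OF rj]])
    then show "branch_vanishes p n (rmul (s j) (rprodn (r j) n))" by simp
  qed
  have "rsumn (\<lambda>j. rmul (s j) (rprodn (r j) n)) k \<in> local_ring p P0"
    using summand by (simp add: local_ring_rsumn[OF p])
  moreover have "branch_vanishes p n (rsumn (\<lambda>j. rmul (s j) (rprodn (r j) n)) k)"
    using summand by (simp add: branch_vanishes_rsumn[OF p])
  then have "branch_vanishes p (min n (p * Suc p)) (rsumn (\<lambda>j. rmul (s j) (rprodn (r j) n)) k)"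
    by (rule branch_vanishes_mono) simp
  moreover have "homog_rep h" using h local_ring_P0_iff[OF p] by blast
  ultimately show ?thesis
    using branch_vanishes_feq[OF assms(1-3) _ _ feq] by simp
qed

definition curve_cofactor :: "nat \<Rightarrow> 'a::field pt \<Rightarrow> 'a" where
  "curve_cofactor p v = fst (snd v) ^ (p - 1) - fst v ^ (p - 1)"

lemma homog_curve_cofactor: "homog (p - 1) (curve_cofactor p)"
  unfolding curve_cofactor_def by (intro homog_diff homog_power homog_X homog_Y)

lemma curve_cofactor_P0: "p \<ge> 2 \<Longrightarrow> curve_cofactor p P0 = -1"
  by (simp add: curve_cofactor_def P0_def)

lemma on_C_factor:
  assumes "p \<ge> 1" "on_C p v"
  shows "snd (snd v) ^ Suc p = fst v * fst (snd v) * curve_cofactor p v"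
proof -
  obtain x y z where v: "v = (x, y, z)" by (cases v) auto
  have "x * y ^ p - x ^ p * y - z ^ (p + 1) = 0" using assms(2) by (simp add: on_C_def v)
  moreover have "y ^ p = y * y ^ (p - 1)" "x ^ p = x * x ^ (p - 1)"
    using assms(1) by (simp_all flip: power_Suc)
  ultimately show ?thesis by (simp add: v curve_cofactor_def algebra_simps)
qed

definition z_over_x :: "'a::field rep" where
  "z_over_x = ((\<lambda>v. snd (snd v)), fst)"

lemma z_over_x_max_ideal: "p > 0 \<Longrightarrow> z_over_x \<in> max_ideal p P0"
  unfolding max_ideal_P0_iff homog_rep_def z_over_x_def using homog_X homog_Z
  by (auto simp: P0_def)

lemma in_mpow_single_term:
  assumes "h \<in> local_ring p P" "s \<in> local_ring p P" "\<And>l. l < n \<Longrightarrow> r l \<in> max_ideal p P"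
    and "\<And>v. on_C p v \<Longrightarrow>
      fst h v * (snd s v * (\<Prod>l<n. snd (r l) v)) = fst s v * (\<Prod>l<n. fst (r l) v) * snd h v"
  shows "in_mpow p P n h"
proof -
  have "fst (rprodn r n) v = (\<Prod>l<n. fst (r l) v)" "snd (rprodn r n) v = (\<Prod>l<n. snd (r l) v)" for v
    by (induction n) (auto simp: rone_def rmul_def)
  then have "feq p h (rsumn (\<lambda>j. rmul s (rprodn r n)) 1)"
    using assms(4) by (simp add: feq_def rzero_def radd_def rmul_def)
  then show ?thesis unfolding in_mpow_def using assms(1-3)
    by (intro conjI exI[of _ 1] exI[of _ "\<lambda>j. s"] exI[of _ "\<lambda>j. r"]) auto
qed

lemma in_mpow_fst_zero:
  assumes "h \<in> local_ring p P" "\<And>v. fst h v = 0"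
  shows "in_mpow p P n h"
  unfolding in_mpow_def using assms
  by (intro conjI exI[of _ 0]) (simp_all add: feq_def rzero_def)

lemma max_ideal_in_mpow_1:
  assumes "p > 0" "h \<in> max_ideal p P0"
  shows "in_mpow p P0 1 h"
  using assms by (intro in_mpow_single_term[OF _ local_ring_rone, where r = "\<lambda>l. h"])
    (auto simp: max_ideal_def rone_def)

lemma in_mpow_2_if_z_coeff_0:
  assumes "p \<ge> 2" "t \<in> local_ring p P0" "homog m (snd t)" "m \<ge> 1"
    and A1: "homog (m - 1) A1" and A2: "homog (m - 1) A2" and "A2 P0 = 0"
    and dec: "\<And>v. fst t v = fst (snd v) * A1 v + snd (snd v) * A2 v"
  shows "in_mpow p P0 2 t"
proof -
  (* t = (z/x) s with s in m_P, because z^(p+1) = x y W on C *)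
  have p: "p > 0" using assms(1) by simp
  let ?W = "curve_cofactor p"
  define s where "s = ((\<lambda>v. snd (snd v) ^ p * A1 v + fst v * A2 v * ?W v), (\<lambda>v. ?W v * snd t v))"
  have "homog (p + (m - 1)) (fst s)"
  proof -
    have h1: "homog (p + (m - 1)) (\<lambda>v. snd (snd v) ^ p * A1 v)"
      by (intro homog_mult homog_power homog_Z A1)
    have deg: "1 + (m - 1) + (p - 1) = p + (m - 1)" using assms(4) p by simp
    have "homog (1 + (m - 1) + (p - 1)) (\<lambda>v. fst v * A2 v * ?W v)"
      by (intro homog_mult homog_X A2 homog_curve_cofactor)
    then have h2: "homog (p + (m - 1)) (\<lambda>v. fst v * A2 v * ?W v)" unfolding deg .
    show ?thesis using homog_add[OF h1 h2] by (simp add: s_def)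
  qed
  moreover have "homog (p + (m - 1)) (snd s)"
    using homog_mult[OF homog_curve_cofactor assms(3), of p] assms(4) p by (simp add: s_def)
  moreover have "snd t P0 \<noteq> 0" using assms(2) local_ring_P0_iff[OF p] by blast
  ultimately have "s \<in> max_ideal p P0"
    unfolding max_ideal_P0_iff[OF p] homog_rep_def
    using assms(7) curve_cofactor_P0[OF assms(1), where 'a = 'a] p by (auto simp: s_def P0_def)
  moreover have "fst t v * (snd rone v * (\<Prod>l<2. snd ((\<lambda>l::nat. if l = 0 then z_over_x else s) l) v))
      = fst rone v * (\<Prod>l<2. fst ((\<lambda>l::nat. if l = 0 then z_over_x else s) l) v) * snd t v"
    if "on_C p v" for v
  proof -
    obtain x y z where v: "v = (x, y, z)" by (cases v) auto
    have "fst t v * (x * (?W v * snd t v))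
        = (x * y * ?W v) * A1 v * snd t v + z * x * A2 v * ?W v * snd t v"
      using dec[of v] by (simp add: v algebra_simps)
    also have "x * y * ?W v = z ^ Suc p" using on_C_factor[OF _ that] p by (simp add: v)
    finally show ?thesis by (simp add: numeral_2_eq_2 rone_def z_over_x_def s_def v algebra_simps)
  qed
  ultimately show ?thesis
    using z_over_x_max_ideal[OF p]
    by (intro in_mpow_single_term[OF assms(2) local_ring_rone[OF p],
          where r = "\<lambda>l. if l = 0 then z_over_x else s"]) auto
qed

lemma local_param_decompose:
  assumes "p \<ge> 2" "local_param p P0 t"
  obtains m A1 A2 where "homog m (fst t)" "homog m (snd t)" "m \<ge> 1" "snd t P0 \<noteq> 0"
    "homog (m - 1) A1" "homog (m - 1) A2" "A2 P0 \<noteq> 0"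
    "\<And>v. fst t v = fst (snd v) * A1 v + snd (snd v) * A2 v"
proof -
  have p: "p > 0" using assms(1) by simp
  have t: "t \<in> max_ideal p P0" and not2: "\<not> in_mpow p P0 2 t"
    using assms(2) by (auto simp: local_param_def)
  then have tl: "t \<in> local_ring p P0" by (simp add: max_ideal_def)
  obtain m where A: "homog m (fst t)" and B: "homog m (snd t)" and B0: "snd t P0 \<noteq> 0"
    and A0: "fst t P0 = 0"
    using t unfolding max_ideal_P0_iff[OF p] homog_rep_def by blast
  have "m \<ge> 1"
  proof (rule ccontr)
    assume "\<not> m \<ge> 1"
    then have "m = 0" by simp
    then have "homog 0 (fst t)" using A by simp
    then have "fst t v = fst t P0" for v by (rule homog_0_const)
    then show False using in_mpow_fst_zero[OF tl] not2 A0 by simp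
  qed
  obtain A1 A2 where A1: "homog (m - 1) A1" and A2: "homog (m - 1) A2"
    and dec: "\<And>v. fst t v = fst (snd v) * A1 v + snd (snd v) * A2 v"
    using homog_decompose[OF A] A0 by auto
  have "A2 P0 \<noteq> 0" using in_mpow_2_if_z_coeff_0[OF assms(1) tl B \<open>m \<ge> 1\<close> A1 A2 _ dec] not2 by blast
  with A B \<open>m \<ge> 1\<close> B0 A1 A2 dec show ?thesis using that by blast
qed

lemma rsub_pull_max_ideal:
  assumes "p > 0" "t \<in> max_ideal p P0" "a \<noteq> 0"
  shows "rsub (pull (a, b, 0, d) t) t \<in> max_ideal p P0"
proof -
  obtain m where A: "homog m (fst t)" and B: "homog m (snd t)" and "snd t P0 \<noteq> 0" "fst t P0 = 0"
    using assms(2) unfolding max_ideal_P0_iff[OF assms(1)] homog_rep_def by blast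
  moreover have "homog_rep (rsub (pull (a, b, 0, d) t) t)"
    using A B by (intro homog_rep_rsub homog_rep_pull) (auto simp: homog_rep_def)
  ultimately show ?thesis using assms(3)
    by (simp add: max_ideal_P0_iff[OF assms(1)] rsub_def pull_def homog_act_diag_P0)
qed

section \<open>Ramification groups at P0\<close>

lemma stab_P0: "stab (P0 :: 'a::field pt) = Bor"
proof -
  have "proj_eq P0 (act g P0) \<longleftrightarrow> (case g of (a, b, c, d) \<Rightarrow> a \<noteq> 0 \<and> c = (0::'a))" for g :: "'a mat2"
    by (cases g) (auto simp: proj_eq_def P0_def act_def)
  then show ?thesis unfolding stab_def Bor_def SL2_def by auto
qed

lemma ram_group_P0:
  "ram_group p P0 t (-1) = Bor"
  "i \<ge> 0 \<Longrightarrow> ram_group p P0 t i = {g \<in> Bor. in_mpow p P0 (nat (i + 1)) (rsub (pull g t) t)}"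
  by (simp_all add: ram_group_def stab_P0)

lemma BorE:
  assumes "g \<in> Bor"
  obtains a b d :: "'a::field" where "g = (a, b, 0, d)" "a * d = 1" "b \<in> Fp"
  using assms unfolding Bor_def SL2_def by auto

lemma zero_one_in_Fp: "0 \<in> Fp" "1 \<in> Fp"
  unfolding Fp_def by (metis of_nat_0 rangeI, metis of_nat_1 rangeI)

lemma Unip_iff: "g \<in> Unip \<longleftrightarrow> (\<exists>b \<in> (Fp :: 'a::field set). g = (1, b, 0, 1))"
  unfolding Unip_def SL2_def using zero_one_in_Fp by auto

lemma Unip_subset_Bor: "Unip \<subseteq> Bor"
  unfolding Unip_def Bor_def by auto

locale curve_local_param =
  fixes p :: nat and t :: "'a::field rep" and m :: nat and A1 A2 :: "'a pt \<Rightarrow> 'a"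
  assumes prime: "prime p" and char: "CHAR('a) = p" and alg_closed: "alg_closed TYPE('a)"
    and homog_num: "homog m (fst t)" and homog_den: "homog m (snd t)" and m_pos: "m \<ge> 1"
    and den_P0: "snd t P0 \<noteq> 0"
    and homog_A1: "homog (m - 1) A1" and homog_A2: "homog (m - 1) A2" and A2_P0: "A2 P0 \<noteq> 0"
    and num_eq: "\<And>v. fst t v = fst (snd v) * A1 v + snd (snd v) * A2 v"
begin

lemma p_ge_2: "p \<ge> 2"
  using prime prime_ge_2_nat by blast

lemma t_in_max_ideal: "t \<in> max_ideal p P0"
proof -
  have "p > 0" using p_ge_2 by simp
  then show ?thesis unfolding max_ideal_P0_iff[OF \<open>p > 0\<close>] homog_rep_def
    using homog_num homog_den den_P0 by (auto simp: num_eq P0_def)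
qed

lemmas polyfun_branch_intros =
  homog_polyfun_branch[OF homog_A1] homog_polyfun_branch[OF homog_A2] homog_polyfun_branch[OF homog_den]
  homog_polyfun_branch[OF homog_comp_act[OF homog_A1]] homog_polyfun_branch[OF homog_comp_act[OF homog_A2]]
  homog_polyfun_branch[OF homog_comp_act[OF homog_den]]

lemma branch_expansion:
  fixes a b d :: 'a
  defines "g \<equiv> \<lambda>z. act (a, b, 0, d) (branch p z)"
  shows "fst (rsub (pull (a, b, 0, d) t) t) (branch p z) =
    z * ((A2 (g z) - d * z ^ p * A1 (g z)) * snd t (branch p z)
       - (A2 (branch p z) - z ^ p * A1 (branch p z)) * snd t (g z))"
proof -
  have g: "fst (snd (g z)) = - (d * z ^ Suc p)" "snd (snd (g z)) = z"
    by (simp_all add: g_def act_def branch_def)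
  have "fst (rsub (pull (a, b, 0, d) t) t) (branch p z)
      = fst t (g z) * snd t (branch p z) - fst t (branch p z) * snd t (g z)"
    by (simp add: rsub_def pull_def g_def)
  also have "\<dots> = (fst (snd (g z)) * A1 (g z) + snd (snd (g z)) * A2 (g z)) * snd t (branch p z)
      - (fst (snd (branch p z)) * A1 (branch p z) + snd (snd (branch p z)) * A2 (branch p z))
        * snd t (g z)"
    by (simp only: num_eq)
  finally show ?thesis unfolding g by (simp add: branch_def algebra_simps)
qed

lemma diag_diff_not_in_mpow:
  assumes "a \<noteq> 0" "a \<noteq> 1" "n \<ge> 2"
  shows "\<not> in_mpow p P0 n (rsub (pull (a, b, 0, d) t) t)"
proof
  assume "in_mpow p P0 n (rsub (pull (a, b, 0, d) t) t)"
  define g where "g z = act (a, b, 0, d) (branch p z)" for z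
  define \<psi> where "\<psi> z = (A2 (g z) - d * z ^ p * A1 (g z)) * snd t (branch p z)
       - (A2 (branch p z) - z ^ p * A1 (branch p z)) * snd t (g z)" for z
  have "p * Suc p \<ge> 2" using p_ge_2 by (metis le_trans mult_le_mono1 le_SucI mult_2 le_add1)
  then have "branch_vanishes p 2 (rsub (pull (a, b, 0, d) t) t)"
    using in_mpow_imp_branch_vanishes[OF prime char alg_closed \<open>in_mpow p P0 n _\<close>] assms(3)
    by (auto intro: branch_vanishes_mono)
  then have "vanishes_to_order (Suc 1) (\<lambda>z. z ^ 1 * \<psi> z)"
    unfolding branch_vanishes_def by (simp add: branch_expansion \<psi>_def g_def numeral_2_eq_2)
  moreover have "polyfun \<psi>" unfolding \<psi>_def g_def
    by (intro polyfun_intros polyfun_branch_intros)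
  ultimately have "\<psi> 0 = 0" using vanishes_to_order_Suc_0[OF alg_closed_infinite[OF alg_closed]] by blast
  moreover have "\<psi> 0 = a ^ (m - 1) * (1 - a) * A2 P0 * snd t P0"
  proof -
    have "a ^ m = a ^ (m - 1) * a" using m_pos by (simp flip: power_Suc2)
    then show ?thesis using p_ge_2 by (simp add: \<psi>_def g_def homog_act_diag_P0[OF homog_A2]
          homog_act_diag_P0[OF homog_den] algebra_simps)
  qed
  ultimately show False using assms A2_P0 den_P0 by simp
qed

lemma unipotent_diff_not_in_mpow:
  assumes "b \<noteq> 0" "n \<ge> p + 3"
  shows "\<not> in_mpow p P0 n (rsub (pull (1, b, 0, 1) t) t)"
proof
  assume "in_mpow p P0 n (rsub (pull (1, b, 0, 1) t) t)"
  let ?u = "(1, b, 0, 1) :: 'a mat2"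
  obtain Q1 where Q1: "homog (m - 1 - 1) Q1" "\<And>v. A1 (act ?u v) - A1 v = fst (snd v) * Q1 v"
    using homog_unipotent_diff[OF homog_A1, of b] by blast
  obtain Q2 where Q2: "homog (m - 1 - 1) Q2" "Q2 P0 = of_nat (m - 1) * b * A2 P0"
    "\<And>v. A2 (act ?u v) - A2 v = fst (snd v) * Q2 v"
    using homog_unipotent_diff[OF homog_A2, of b] by blast
  obtain QB where QB: "homog (m - 1) QB" "QB P0 = of_nat m * b * snd t P0"
    "\<And>v. snd t (act ?u v) - snd t v = fst (snd v) * QB v"
    using homog_unipotent_diff[OF homog_den, of b] by blast
  define \<phi> where "\<phi> z = (Q2 (branch p z) - z ^ p * Q1 (branch p z)) * snd t (branch p z)
      - (A2 (branch p z) - z ^ p * A1 (branch p z)) * QB (branch p z)" for z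
  have "fst (rsub (pull ?u t) t) (branch p z) = z ^ (p + 2) * - \<phi> z" for z
  proof -
    have y: "fst (snd (branch p z)) = - (z * z ^ p)" by (simp add: branch_def)
    have e: "A1 (act ?u (branch p z)) = A1 (branch p z) - z * z ^ p * Q1 (branch p z)"
      "A2 (act ?u (branch p z)) = A2 (branch p z) - z * z ^ p * Q2 (branch p z)"
      "snd t (act ?u (branch p z)) = snd t (branch p z) - z * z ^ p * QB (branch p z)"
      using Q1(2)[of "branch p z"] Q2(3)[of "branch p z"] QB(3)[of "branch p z"]
      by (simp_all add: y algebra_simps)
    show ?thesis by (simp only: branch_expansion e) (simp add: \<phi>_def algebra_simps)
  qed
  moreover have "p * Suc p \<ge> p + 3"
    using p_ge_2 mult_le_mono[of 2 p 2 p] by simp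
  then have "branch_vanishes p (Suc (p + 2)) (rsub (pull ?u t) t)"
    using in_mpow_imp_branch_vanishes[OF prime char alg_closed \<open>in_mpow p P0 n _\<close>] assms(2)
    by (auto intro: branch_vanishes_mono)
  ultimately have "vanishes_to_order (Suc (p + 2)) (\<lambda>z. z ^ (p + 2) * - \<phi> z)"
    unfolding branch_vanishes_def by simp
  moreover have "polyfun (\<lambda>z. - \<phi> z)" unfolding \<phi>_def
    by (intro polyfun_intros polyfun_branch_intros homog_polyfun_branch[OF Q1(1)]
        homog_polyfun_branch[OF Q2(1)] homog_polyfun_branch[OF QB(1)])
  ultimately have "- \<phi> 0 = 0" using vanishes_to_order_Suc_0[OF alg_closed_infinite[OF alg_closed]] by blast
  moreover have "- \<phi> 0 = b * A2 P0 * snd t P0"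
    using p_ge_2 m_pos by (simp add: \<phi>_def Q2(2) QB(2) of_nat_diff algebra_simps)
  ultimately show False using assms(1) A2_P0 den_P0 by simp
qed

lemma unipotent_diff_numerator:
  fixes b :: 'a
  obtains N where "homog (m - 1 + m) N" "N P0 = 0"
    "\<And>v. fst (rsub (pull (1, b, 0, 1) t) t) v = fst (snd v) * N v"
proof -
  let ?u = "(1, b, 0, 1) :: 'a mat2"
  obtain QA where QA: "homog (m - 1) QA" "QA P0 = of_nat m * b * fst t P0"
    "\<And>v. fst t (act ?u v) - fst t v = fst (snd v) * QA v"
    using homog_unipotent_diff[OF homog_num, of b] by blast
  obtain QB where QB: "homog (m - 1) QB" "\<And>v. snd t (act ?u v) - snd t v = fst (snd v) * QB v"
    using homog_unipotent_diff[OF homog_den, of b] by blast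
  define N where "N v = QA v * snd t v - fst t v * QB v" for v
  have "homog (m + (m - 1)) (\<lambda>v. fst t v * QB v)" by (rule homog_mult[OF homog_num QB(1)])
  then have "homog (m - 1 + m) N"
    unfolding N_def using homog_diff[OF homog_mult[OF QA(1) homog_den]] by (simp add: add.commute)
  moreover have "N P0 = 0" using QA(2) by (simp add: N_def num_eq P0_def)
  moreover have "fst (rsub (pull ?u t) t) v = fst (snd v) * N v" for v
    using QA(3)[of v] QB(2)[of v] by (simp add: rsub_def pull_def N_def algebra_simps eq_diff_eq)
  ultimately show ?thesis using that by blast
qed

lemma unipotent_quotient_max_ideal:
  assumes "homog (m - 1 + m) N" "N P0 = 0"
  shows "((\<lambda>v. fst v ^ p * N v), (\<lambda>v. curve_cofactor p v * snd t (act (1, b, 0, 1) v) * snd t v))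
    \<in> max_ideal p P0" (is "?q \<in> _")
proof -
  have p: "p > 0" using p_ge_2 by simp
  have deg: "p + (m - 1 + m) = (p - 1) + m + m" using p m_pos by simp
  have "homog ((p - 1) + m + m) (fst ?q)"
    unfolding fst_conv deg[symmetric] by (intro homog_mult homog_power homog_X assms(1))
  moreover have "homog ((p - 1) + m + m) (snd ?q)"
    unfolding snd_conv by (intro homog_mult homog_curve_cofactor homog_comp_act[OF homog_den] homog_den)
  ultimately have "homog_rep ?q" unfolding homog_rep_def by blast
  moreover have "act (1, b, 0, 1) P0 = P0" by (simp add: act_def P0_def)
  ultimately show ?thesis
    unfolding max_ideal_P0_iff[OF p]
    using den_P0 curve_cofactor_P0[OF p_ge_2, where 'a = 'a] assms(2) by (auto simp: P0_def)
qed

lemma unipotent_diff_in_mpow: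
  assumes "1 \<le> n" "n \<le> p + 2"
  shows "in_mpow p P0 n (rsub (pull (1, b, 0, 1) t) t)"
proof -
  (* on C, y = (z/x)^(p+1) x^p / W, so the difference is (z/x)^(p+2-n) * cc * (z/x)^(n-1) *)
  have p: "p > 0" using p_ge_2 by simp
  let ?u = "(1, b, 0, 1) :: 'a mat2"
  let ?h = "rsub (pull ?u t) t"
  let ?W = "curve_cofactor p"
  have h: "?h \<in> local_ring p P0"
    using rsub_pull_max_ideal[OF p t_in_max_ideal, of 1 b 1] by (simp add: max_ideal_def)
  obtain N where N: "homog (m - 1 + m) N" "N P0 = 0" and fst_h: "\<And>v. fst ?h v = fst (snd v) * N v"
    using unipotent_diff_numerator[of b] by blast
  define cc where "cc = ((\<lambda>v. fst v ^ p * N v), (\<lambda>v. ?W v * snd t (act ?u v) * snd t v))"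
  have cc: "cc \<in> max_ideal p P0" unfolding cc_def by (rule unipotent_quotient_max_ideal[OF N])
  define s :: "'a rep" where "s = ((\<lambda>v. snd (snd v) ^ (p + 2 - n)), (\<lambda>v. fst v ^ (p + 2 - n)))"
  have "s \<in> local_ring p P0"
    unfolding local_ring_P0_iff[OF p] homog_rep_def s_def
    using homog_power[OF homog_Z] homog_power[OF homog_X] by (auto simp: P0_def)
  moreover have "\<And>l. l < n \<Longrightarrow> (if l = 0 then cc else z_over_x) \<in> max_ideal p P0"
    using cc z_over_x_max_ideal[OF p, where 'a = 'a] by simp
  moreover have "fst ?h v * (snd s v * (\<Prod>l<n. snd (if l = 0 then cc else z_over_x) v))
      = fst s v * (\<Prod>l<n. fst (if l = 0 then cc else z_over_x) v) * snd ?h v"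
    if "on_C p v" for v
  proof -
    let ?x = "fst v" and ?y = "fst (snd v)" and ?z = "snd (snd v)"
    let ?B = "snd t v" and ?Bu = "snd t (act ?u v)"
    obtain k where k: "n = Suc k" using assms(1) by (cases n) auto
    have x_pow: "?x ^ (p + 2 - n) * ?x ^ k = ?x * ?x ^ p"
      using assms(2) by (simp add: k flip: power_add power_Suc)
    have z_pow: "?z ^ (p + 2 - n) * ?z ^ k = ?x * ?y * ?W v"
      using assms(2) on_C_factor[OF _ that] p by (simp add: k flip: power_add)
    have prod_snd: "(\<Prod>l<n. snd (if l = 0 then cc else z_over_x) v) = snd cc v * ?x ^ k"
      and prod_fst: "(\<Prod>l<n. fst (if l = 0 then cc else z_over_x) v) = fst cc v * ?z ^ k"
      unfolding k prod.lessThan_Suc_shift by (simp_all add: z_over_x_def)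
    have "fst ?h v * (snd s v * (\<Prod>l<n. snd (if l = 0 then cc else z_over_x) v))
        = (?y * N v * ?W v * ?Bu * ?B) * (?x ^ (p + 2 - n) * ?x ^ k)"
      by (simp add: prod_snd fst_h s_def cc_def mult_ac)
    also have "\<dots> = (?x ^ p * N v * ?Bu * ?B) * (?z ^ (p + 2 - n) * ?z ^ k)"
      unfolding x_pow z_pow by (simp add: mult_ac)
    also have "\<dots> = fst s v * (fst cc v * ?z ^ k) * snd ?h v"
      by (simp add: s_def cc_def rsub_def pull_def mult_ac)
    finally show ?thesis by (simp only: prod_fst)
  qed
  ultimately show ?thesis by (rule in_mpow_single_term[OF h])
qed

lemma ram_group_0: "ram_group p P0 t 0 = Bor"
proof -
  have "in_mpow p P0 1 (rsub (pull g t) t)" if g: "g \<in> Bor" for g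
  proof -
    obtain a b d where g: "g = (a, b, 0, d)" "a * d = 1" using BorE[OF g] by metis
    have "p > 0" using p_ge_2 by simp
    moreover have "a \<noteq> 0" using g(2) by auto
    ultimately show ?thesis
      unfolding g(1) by (intro max_ideal_in_mpow_1 rsub_pull_max_ideal t_in_max_ideal)
  qed
  then show ?thesis by (auto simp: ram_group_P0)
qed

lemma in_mpow_2_imp_unipotent:
  assumes "g \<in> Bor" "n \<ge> 2" "in_mpow p P0 n (rsub (pull g t) t)"
  obtains b where "g = (1, b, 0, 1)" "b \<in> Fp"
proof -
  obtain a b d where g: "g = (a, b, 0, d)" "a * d = 1" "b \<in> Fp" using BorE[OF assms(1)] by metis
  have "a = 1"
  proof (rule ccontr)
    assume "a \<noteq> 1"
    moreover have "a \<noteq> 0" using g(2) by auto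
    ultimately show False using diag_diff_not_in_mpow[of a n b d] assms(2,3) g(1) by blast
  qed
  then show ?thesis using g that by simp
qed

lemma ram_group_Unip:
  assumes "1 \<le> i" "i \<le> int p + 1"
  shows "ram_group p P0 t i = Unip"
proof -
  define n where "n = nat (i + 1)"
  have n: "2 \<le> n" "n \<le> p + 2" using assms by (simp_all add: n_def)
  have "g \<in> Unip" if g: "g \<in> Bor" "in_mpow p P0 n (rsub (pull g t) t)" for g
    using in_mpow_2_imp_unipotent[OF g(1) n(1) g(2)] unfolding Unip_iff by blast
  moreover have "in_mpow p P0 n (rsub (pull g t) t)" if "g \<in> Unip" for g
  proof -
    obtain b where "g = (1, b, 0, 1)" using \<open>g \<in> Unip\<close> unfolding Unip_iff by blast
    then show ?thesis using n unipotent_diff_in_mpow[of n b] by simp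
  qed
  moreover have "ram_group p P0 t i = {g \<in> Bor. in_mpow p P0 n (rsub (pull g t) t)}"
    using assms(1) by (simp add: ram_group_P0 n_def)
  ultimately show ?thesis using Unip_subset_Bor by blast
qed

lemma ram_group_trivial:
  assumes "i \<ge> int p + 2"
  shows "ram_group p P0 t i = {(1, 0, 0, 1)}"
proof -
  define n where "n = nat (i + 1)"
  have n: "2 \<le> n" "p + 3 \<le> n" using assms by (simp_all add: n_def)
  have "g = (1, 0, 0, 1)" if g: "g \<in> Bor" "in_mpow p P0 n (rsub (pull g t) t)" for g
  proof -
    obtain b where b: "g = (1, b, 0, 1)" using in_mpow_2_imp_unipotent[OF g(1) n(1) g(2)] .
    have "b = 0"
    proof (rule ccontr)
      assume "b \<noteq> 0"
      from unipotent_diff_not_in_mpow[OF this n(2)] g(2) b show False by simp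
    qed
    then show ?thesis using b by simp
  qed
  moreover have "(1, 0, 0, 1) \<in> (Bor :: 'a mat2 set)"
    using Unip_subset_Bor zero_one_in_Fp(1) Unip_iff[of "(1, 0, 0, 1)"] by blast
  moreover have "in_mpow p P0 n (rsub (pull (1, 0, 0, 1) t) t)"
  proof (rule in_mpow_fst_zero)
    have "p > 0" using p_ge_2 by simp
    then show "rsub (pull (1, 0, 0, 1) t) t \<in> local_ring p P0"
      using rsub_pull_max_ideal[OF _ t_in_max_ideal, of 1 0 1] by (simp add: max_ideal_def)
  next
    fix v :: "'a pt"
    show "fst (rsub (pull (1, 0, 0, 1) t) t) v = 0"
      by (cases v) (simp add: rsub_def pull_def act_def)
  qed
  moreover have "ram_group p P0 t i = {g \<in> Bor. in_mpow p P0 n (rsub (pull g t) t)}"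
    using assms by (simp add: ram_group_P0 n_def)
  ultimately show ?thesis by blast
qed

end

theorem mainTheorem8:
  fixes p :: nat
  assumes "prime p" and "odd p"
    and "CHAR('a::field) = p"
    and "alg_closed TYPE('a)"
  shows "\<forall>t :: 'a rep. local_param p P0 t \<longrightarrow>
           (\<forall>i::int. i \<ge> -1 \<longrightarrow>
              ram_group p P0 t i =
                (if i \<le> 0 then Bor
                 else if i \<le> int p + 1 then Unip
                 else {(1, 0, 0, 1)}))"
proof (intro allI impI)
  fix t :: "'a rep" and i :: int
  assume t: "local_param p P0 t" and "i \<ge> -1"
  have "p \<ge> 2" using assms(1) prime_ge_2_nat by blast
  then obtain m A1 A2 where "curve_local_param p t m A1 A2"
    using local_param_decompose[OF _ t] assms(1,3,4) unfolding curve_local_param_def by metis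
  then interpret curve_local_param p t m A1 A2 .
  consider "i = -1" | "i = 0" | "1 \<le> i" "i \<le> int p + 1" | "i \<ge> int p + 2"
    using \<open>i \<ge> -1\<close> by linarith
  then show "ram_group p P0 t i =
      (if i \<le> 0 then Bor else if i \<le> int p + 1 then Unip else {(1, 0, 0, 1)})"
    by cases (simp_all add: ram_group_P0(1) ram_group_0 ram_group_Unip ram_group_trivial)
qed

end
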